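(* Let $n>0$, $m\ge 0$, let $a_1,\dots,a_n$ be atoms and $l_1,\dots,l_m$ literals (atoms or negated atoms $\neg a$). Then the formula $l_1\wedge\cdots\wedge l_m\to a_1\vee\cdots\vee a_n$ is strongly equivalent to the set of the $n$ formulas, for $i=1,\dots,n$, $$(l_1\wedge\cdots\wedge l_m\wedge(a_1\to a_i)\wedge\cdots\wedge(a_n\to a_i))\to a_i.$$
   Context: Formulas are built from atoms and $\bot$ using $\wedge,\vee,\to$ ($\top:=\bot\to\bot$, $\neg F:=F\to\bot$); an empty conjunction is $\top$. Reduct: $\bot^X=\bot$; $a^X=a$ if $a\in X$, else $\bot$; $(F\otimes G)^X=F^X\otimes G^X$ if $X\models F\otimes G$, else $\bot$; $\Gamma^X=\{F^X:F\in\Gamma\}$. $X$ is a stable model of $\Gamma$ if $X\models\Gamma^X$ and no proper subset of $X$ satisfies $\Gamma^X$. Theories $\Gamma_1,\Gamma_2$ are strongly equivalent if for every theory $\Gamma$, $\Gamma_1\cup\Gamma$ and $\Gamma_2\cup\Gamma$ have the same stable models. *)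

theory Defs
  imports Main
begin

datatype 'a form = Bot | Atom 'a | And "'a form" "'a form" | Or "'a form" "'a form"
  | Imp "'a form" "'a form"

definition Top :: "'a form" where "Top = Imp Bot Bot"
definition Neg :: "'a form \<Rightarrow> 'a form" where "Neg F = Imp F Bot"

fun sat :: "'a set \<Rightarrow> 'a form \<Rightarrow> bool" where
  "sat X Bot = False"
| "sat X (Atom a) = (a \<in> X)"
| "sat X (And F G) = (sat X F \<and> sat X G)"
| "sat X (Or F G) = (sat X F \<or> sat X G)"
| "sat X (Imp F G) = (sat X F \<longrightarrow> sat X G)"

definition sat_th :: "'a set \<Rightarrow> 'a form set \<Rightarrow> bool" where
  "sat_th X \<Gamma> = (\<forall>F\<in>\<Gamma>. sat X F)"

fun reduct :: "'a form \<Rightarrow> 'a set \<Rightarrow> 'a form" where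
  "reduct Bot X = Bot"
| "reduct (Atom a) X = (if a \<in> X then Atom a else Bot)"
| "reduct (And F G) X = (if sat X (And F G) then And (reduct F X) (reduct G X) else Bot)"
| "reduct (Or F G) X = (if sat X (Or F G) then Or (reduct F X) (reduct G X) else Bot)"
| "reduct (Imp F G) X = (if sat X (Imp F G) then Imp (reduct F X) (reduct G X) else Bot)"

definition reduct_th :: "'a form set \<Rightarrow> 'a set \<Rightarrow> 'a form set" where
  "reduct_th \<Gamma> X = (\<lambda>F. reduct F X) ` \<Gamma>"

definition stable_model :: "'a set \<Rightarrow> 'a form set \<Rightarrow> bool" where
  "stable_model X \<Gamma> = (sat_th X (reduct_th \<Gamma> X) \<and>
     (\<forall>Y. Y \<subset> X \<longrightarrow> \<not> sat_th Y (reduct_th \<Gamma> X)))"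

definition strongly_equiv :: "'a form set \<Rightarrow> 'a form set \<Rightarrow> bool" where
  "strongly_equiv \<Gamma>1 \<Gamma>2 = (\<forall>\<Gamma> X. stable_model X (\<Gamma>1 \<union> \<Gamma>) \<longleftrightarrow> stable_model X (\<Gamma>2 \<union> \<Gamma>))"

definition literal :: "'a form \<Rightarrow> bool" where
  "literal F = (\<exists>a. F = Atom a \<or> F = Neg (Atom a))"

fun big_and :: "'a form list \<Rightarrow> 'a form" where
  "big_and [] = Top"
| "big_and [F] = F"
| "big_and (F # Fs) = And F (big_and Fs)"

fun big_or :: "'a form list \<Rightarrow> 'a form" where
  "big_or [] = Bot"
| "big_or [F] = F"
| "big_or (F # Fs) = Or F (big_or Fs)"

end

theory Submission
  imports Defs
begin

(*
  For Y \<subseteq> X, read "sat Y (reduct F X)" as satisfaction of F in the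
  here-and-there interpretation (Y, X).  The stable models of a theory are
  determined by these pairs, and since the reduct of a union is the union of
  the reducts, two theories that are satisfied by exactly the same pairs
  (Y, X) with Y \<subseteq> X are strongly equivalent (lemma ht_equiv_strongly_equiv).

  We therefore compute, in closed form, the here-and-there semantics of the
  disjunctive rule  L \<rightarrow> a_1 \<or> ... \<or> a_n  and of each shifted rule
  L \<and> (a_1 \<rightarrow> a_i) \<and> ... \<and> (a_n \<rightarrow> a_i) \<rightarrow> a_i, where L is an arbitrary
  conjunction (the result does not need the conjuncts to be literals).
  Both sides then reduce to one propositional equivalence about the set of
  head atoms (shifted_rules_equiv), which uses that the head is nonempty.
*)

lemma sat_reduct_imp_sat: "sat Y (reduct F X) \<Longrightarrow> sat X F"
  by (induction F) (auto split: if_splits)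

text \<open>The here-and-there semantics of the connectives.  Because of the
  previous lemma, the side conditions "X satisfies the compound" of the reduct
  are redundant for conjunction and disjunction.\<close>
lemma sat_reduct_And:
  "sat Y (reduct (And F G) X) = (sat Y (reduct F X) \<and> sat Y (reduct G X))"
  using sat_reduct_imp_sat[of Y F X] sat_reduct_imp_sat[of Y G X] by auto

lemma sat_reduct_Or:
  "sat Y (reduct (Or F G) X) = (sat Y (reduct F X) \<or> sat Y (reduct G X))"
  using sat_reduct_imp_sat[of Y F X] sat_reduct_imp_sat[of Y G X] by auto

lemma sat_reduct_Imp:
  "sat Y (reduct (Imp F G) X) = (sat X (Imp F G) \<and> (sat Y (reduct F X) \<longrightarrow> sat Y (reduct G X)))"
  by simp

lemma sat_reduct_Atom: "Y \<subseteq> X \<Longrightarrow> sat Y (reduct (Atom a) X) = (a \<in> Y)"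
  by auto

lemma sat_big_and: "sat X (big_and Fs) = (\<forall>F\<in>set Fs. sat X F)"
  by (induction Fs rule: big_and.induct) (auto simp: Top_def)

lemma sat_big_or: "sat X (big_or Fs) = (\<exists>F\<in>set Fs. sat X F)"
  by (induction Fs rule: big_or.induct) auto

lemma sat_reduct_big_and:
  "sat Y (reduct (big_and Fs) X) = (\<forall>F\<in>set Fs. sat Y (reduct F X))"
  by (induction Fs rule: big_and.induct)
     (auto simp: Top_def sat_reduct_And simp del: reduct.simps(3) sat.simps(3))

lemma sat_reduct_big_or:
  "sat Y (reduct (big_or Fs) X) = (\<exists>F\<in>set Fs. sat Y (reduct F X))"
  by (induction Fs rule: big_or.induct)
     (auto simp: sat_reduct_Or simp del: reduct.simps(4) sat.simps(4))

definition ht_equiv :: "'a form set \<Rightarrow> 'a form set \<Rightarrow> bool" where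
  "ht_equiv \<Gamma>1 \<Gamma>2 =
     (\<forall>Y X. Y \<subseteq> X \<longrightarrow> sat_th Y (reduct_th \<Gamma>1 X) = sat_th Y (reduct_th \<Gamma>2 X))"

lemma sat_th_reduct_Un:
  "sat_th Y (reduct_th (\<Gamma>1 \<union> \<Gamma>2) X) = (sat_th Y (reduct_th \<Gamma>1 X) \<and> sat_th Y (reduct_th \<Gamma>2 X))"
  by (auto simp: sat_th_def reduct_th_def)

lemma sat_th_reduct_singleton: "sat_th Y (reduct_th {F} X) = sat Y (reduct F X)"
  by (simp add: sat_th_def reduct_th_def)

lemma sat_th_reduct_image:
  "sat_th Y (reduct_th (f ` A) X) = (\<forall>a\<in>A. sat Y (reduct (f a) X))"
  by (auto simp: sat_th_def reduct_th_def)

text \<open>Stability of X only inspects pairs Y \<subseteq> X, and adding a theory to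
  both sides preserves here-and-there equivalence.\<close>
lemma ht_equiv_strongly_equiv:
  assumes "ht_equiv \<Gamma>1 \<Gamma>2"
  shows "strongly_equiv \<Gamma>1 \<Gamma>2"
  using assms unfolding strongly_equiv_def stable_model_def ht_equiv_def sat_th_reduct_Un
  by (metis order_refl psubset_imp_subset)

lemma sat_reduct_disjunctive_rule:
  assumes "Y \<subseteq> X"
  shows "sat Y (reduct (Imp (big_and ls) (big_or (map Atom as))) X) =
    (((\<forall>F\<in>set ls. sat X F) \<longrightarrow> set as \<inter> X \<noteq> {}) \<and>
     ((\<forall>F\<in>set ls. sat Y (reduct F X)) \<longrightarrow> set as \<inter> Y \<noteq> {}))"
  using assms
  by (simp add: sat_reduct_Imp sat_reduct_big_and sat_reduct_big_or del: reduct.simps)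
     (auto simp: sat_big_and sat_big_or)

definition shifted_rule :: "'a form list \<Rightarrow> 'a list \<Rightarrow> 'a \<Rightarrow> 'a form" where
  "shifted_rule ls as a = Imp (big_and (ls @ map (\<lambda>aj. Imp (Atom aj) (Atom a)) as)) (Atom a)"

lemma sat_reduct_shifted_rule:
  assumes "Y \<subseteq> X"
  shows "sat Y (reduct (shifted_rule ls as a) X) =
    (((\<forall>F\<in>set ls. sat X F) \<and> (set as \<inter> X \<noteq> {} \<longrightarrow> a \<in> X) \<longrightarrow> a \<in> X) \<and>
     ((\<forall>F\<in>set ls. sat Y (reduct F X)) \<and> (set as \<inter> X \<noteq> {} \<longrightarrow> a \<in> X) \<and>
        (set as \<inter> Y \<noteq> {} \<longrightarrow> a \<in> Y) \<longrightarrow> a \<in> Y))"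
proof -
  let ?body = "big_and (ls @ map (\<lambda>aj. Imp (Atom aj) (Atom a)) as)"
  have body_there: "sat X ?body =
      ((\<forall>F\<in>set ls. sat X F) \<and> (set as \<inter> X \<noteq> {} \<longrightarrow> a \<in> X))"
    by (force simp: sat_big_and)
  have body_here: "sat Y (reduct ?body X) =
      ((\<forall>F\<in>set ls. sat Y (reduct F X)) \<and> (set as \<inter> X \<noteq> {} \<longrightarrow> a \<in> X) \<and>
       (set as \<inter> Y \<noteq> {} \<longrightarrow> a \<in> Y))"
  proof -
    have arrow: "sat Y (reduct (Imp (Atom b) (Atom a)) X) = ((b \<in> X \<longrightarrow> a \<in> X) \<and> (b \<in> Y \<longrightarrow> a \<in> Y))"
      for b using assms by auto
    show ?thesis
      by (auto simp: sat_reduct_big_and ball_Un arrow simp del: reduct.simps)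
  qed
  show ?thesis
    using assms unfolding shifted_rule_def sat_reduct_Imp body_here
    by (auto simp: body_there sat_reduct_Atom dest: sat_reduct_imp_sat simp del: reduct.simps)
qed

lemma shifted_rules_equiv:
  assumes "A \<noteq> {}" and "P \<longrightarrow> Q"
  shows "((Q \<longrightarrow> A \<inter> X \<noteq> {}) \<and> (P \<longrightarrow> A \<inter> Y \<noteq> {})) \<longleftrightarrow>
    (\<forall>a\<in>A. ((Q \<and> (A \<inter> X \<noteq> {} \<longrightarrow> a \<in> X) \<longrightarrow> a \<in> X) \<and>
             (P \<and> (A \<inter> X \<noteq> {} \<longrightarrow> a \<in> X) \<and> (A \<inter> Y \<noteq> {} \<longrightarrow> a \<in> Y) \<longrightarrow> a \<in> Y)))"
  using assms by blast

theorem lemma1: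
  fixes as :: "'a list" and ls :: "'a form list"
  assumes "length as > 0"
    and "\<forall>l\<in>set ls. literal l"
  shows "strongly_equiv
     {Imp (big_and ls) (big_or (map Atom as))}
     {Imp (big_and (ls @ map (\<lambda>aj. Imp (Atom aj) (Atom (as ! i))) as)) (Atom (as ! i)) | i. i < length as}"
proof -
  have shifted: "{Imp (big_and (ls @ map (\<lambda>aj. Imp (Atom aj) (Atom (as ! i))) as)) (Atom (as ! i))
      | i. i < length as} = shifted_rule ls as ` set as"
    by (auto simp: shifted_rule_def in_set_conv_nth image_iff)
  have nonempty: "set as \<noteq> {}" using assms(1) by auto
  have body: "(\<forall>F\<in>set ls. sat Y (reduct F X)) \<longrightarrow> (\<forall>F\<in>set ls. sat X F)" for Y X
    using sat_reduct_imp_sat by blast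
  have "ht_equiv {Imp (big_and ls) (big_or (map Atom as))} (shifted_rule ls as ` set as)"
    unfolding ht_equiv_def sat_th_reduct_singleton sat_th_reduct_image
    by (simp add: sat_reduct_disjunctive_rule sat_reduct_shifted_rule
        shifted_rules_equiv[OF nonempty body] del: reduct.simps sat.simps)
  then show ?thesis
    unfolding shifted by (rule ht_equiv_strongly_equiv)
qed

end
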